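(* Let $\xi\in L^0(\Omega,\mathcal F,Q;\mathbb R^d)$, $f:\mathcal P(\mathbb R^d)\to\mathbb R$, $L\in\mathcal L^Q$, and suppose $F_{Q_L}:\mathcal L^{Q_L}\to\mathbb R$, $F_{Q_L}(L')=f((L'Q_L)_\xi)$, is differentiable at $L_0=1$. Then there exists a bounded Borel function $g:\mathbb R^d\to\mathbb R$ such that $DF_{Q_L}(1)=g(\xi)$, $Q$-a.s. Moreover $g$ depends on $(Q,L,\xi)$ only through $(Q_L)_\xi$, in the following sense: if $Q'$ is any probability measure on $(\Omega,\mathcal F)$, $L'\in\mathcal L^{Q'}$ and $\xi'\in L^0(\Omega,\mathcal F,Q';\mathbb R^d)$ satisfy $(L'Q')_{\xi'}=(LQ)_\xi$, then $\widehat L'\mapsto f((\widehat L'Q'_{L'})_{\xi'})$, $\widehat L'\in\mathcal L^{Q'_{L'}}$, is differentiable at $1$ and its derivative equals $g(\xi')$, $Q'_{L'}$-a.s. (Consequently one writes $\partial_1F((Q_L)_\xi,x):=g(x)$.)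
   Context: $(\Omega,\mathcal B(\Omega))$ is a Radon space, $Q$ a probability measure on it, $\mathcal F=\mathcal B(\Omega)\vee\mathcal N_Q$. For any probability $Q'$ on $(\Omega,\mathcal F)$: $L^p_0(Q'):=\{\eta\in L^p(Q'):E^{Q'}[\eta]=0\}$, $\mathcal L^{Q'}:=\{L\in L^1(Q'):\ L>0\ Q'\text{-a.s.},\ E^{Q'}[L]=1\}$, $Q'_L:=LQ'$, $(LQ')_\xi$ is the law of $\xi$ under $LQ'$ ($\int\varphi\,d(LQ')_\xi=E^{Q'}[L\varphi(\xi)]$), and $F_{Q'}(L):=f((LQ')_\xi)$. $F_{Q'}$ is differentiable at $L$ if there is a continuous linear $(DF_{Q'})(L):L^1_0(Q')\to\mathbb R$ with $F_{Q'}(L'')-F_{Q'}(L)=(DF_{Q'})(L)(L''-L)+o(|L''-L|_{L^1(Q')})$ for $L''\in\mathcal L^{Q'}$, $|L''-L|_{L^1(Q')}\to0$; it is identified with the unique $DF_{Q'}(L)\in L^\infty_0(Q')$ such that $(DF_{Q'})(L)(\eta)=E^{Q'}[DF_{Q'}(L)\eta]$. *)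

theory Defs
  imports "HOL-Probability.Probability"
begin

definition radon_space :: "'a::topological_space itself \<Rightarrow> bool" where
  "radon_space _ \<longleftrightarrow>
     (\<forall>x y::'a. x \<noteq> y \<longrightarrow> (\<exists>U V. open U \<and> open V \<and> x \<in> U \<and> y \<in> V \<and> U \<inter> V = {})) \<and>
     (\<forall>\<mu>::'a measure. sets \<mu> = sets borel \<and> finite_measure \<mu> \<longrightarrow>
        (\<forall>A \<in> sets borel. emeasure \<mu> A = (SUP K \<in> {K. compact K \<and> K \<subseteq> A}. emeasure \<mu> K)))"

definition L1_0 :: "'a measure \<Rightarrow> ('a \<Rightarrow> real) set" where
  "L1_0 M = {\<eta>. integrable M \<eta> \<and> integral\<^sup>L M \<eta> = 0}"

definition Linf_0 :: "'a measure \<Rightarrow> ('a \<Rightarrow> real) set" where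
  "Linf_0 M = {D. D \<in> borel_measurable M \<and> (\<exists>C. AE \<omega> in M. \<bar>D \<omega>\<bar> \<le> C) \<and> integral\<^sup>L M D = 0}"

definition L1_norm :: "'a measure \<Rightarrow> ('a \<Rightarrow> real) \<Rightarrow> real" where
  "L1_norm M \<eta> = integral\<^sup>L M (\<lambda>\<omega>. \<bar>\<eta> \<omega>\<bar>)"

definition dens_set :: "'a measure \<Rightarrow> ('a \<Rightarrow> real) set" where
  "dens_set M = {L. integrable M L \<and> (AE \<omega> in M. L \<omega> > 0) \<and> integral\<^sup>L M L = 1}"

definition law_under :: "'a measure \<Rightarrow> ('a \<Rightarrow> real) \<Rightarrow> ('a \<Rightarrow> 'b::topological_space) \<Rightarrow> 'b measure" where
  "law_under M L \<xi> = distr (density M (\<lambda>\<omega>. ennreal (L \<omega>))) borel \<xi>"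

definition F_fun :: "('b::topological_space measure \<Rightarrow> real) \<Rightarrow> ('a \<Rightarrow> 'b) \<Rightarrow> 'a measure \<Rightarrow> ('a \<Rightarrow> real) \<Rightarrow> real" where
  "F_fun f \<xi> M L = f (law_under M L \<xi>)"

definition cont_lin_L1_0 :: "'a measure \<Rightarrow> (('a \<Rightarrow> real) \<Rightarrow> real) \<Rightarrow> bool" where
  "cont_lin_L1_0 M l \<longleftrightarrow>
     (\<forall>\<eta>1 \<in> L1_0 M. \<forall>\<eta>2 \<in> L1_0 M. l (\<lambda>\<omega>. \<eta>1 \<omega> + \<eta>2 \<omega>) = l \<eta>1 + l \<eta>2) \<and>
     (\<forall>c. \<forall>\<eta> \<in> L1_0 M. l (\<lambda>\<omega>. c * \<eta> \<omega>) = c * l \<eta>) \<and>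
     (\<exists>C. \<forall>\<eta> \<in> L1_0 M. \<bar>l \<eta>\<bar> \<le> C * L1_norm M \<eta>)"

definition has_DF :: "'a measure \<Rightarrow> (('a \<Rightarrow> real) \<Rightarrow> real) \<Rightarrow> ('a \<Rightarrow> real) \<Rightarrow> (('a \<Rightarrow> real) \<Rightarrow> real) \<Rightarrow> bool" where
  "has_DF M F L l \<longleftrightarrow> cont_lin_L1_0 M l \<and>
     (\<forall>\<epsilon>>0. \<exists>\<delta>>0. \<forall>L'' \<in> dens_set M. L1_norm M (\<lambda>\<omega>. L'' \<omega> - L \<omega>) < \<delta> \<longrightarrow>
        \<bar>F L'' - F L - l (\<lambda>\<omega>. L'' \<omega> - L \<omega>)\<bar> \<le> \<epsilon> * L1_norm M (\<lambda>\<omega>. L'' \<omega> - L \<omega>))"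

text \<open>The element \<open>D \<in> L^\<infinity>_0(M)\<close> with \<open>l(\<eta>) = E^M[D \<eta>]\<close> for \<open>\<eta> \<in> L^1_0(M)\<close>
  (the identification of the derivative with an element of \<open>L^\<infinity>_0\<close>).\<close>
definition represents :: "'a measure \<Rightarrow> (('a \<Rightarrow> real) \<Rightarrow> real) \<Rightarrow> ('a \<Rightarrow> real) \<Rightarrow> bool" where
  "represents M l D \<longleftrightarrow> D \<in> Linf_0 M \<and> (\<forall>\<eta> \<in> L1_0 M. l \<eta> = integral\<^sup>L M (\<lambda>\<omega>. D \<omega> * \<eta> \<omega>))"

definition derivative_equals :: "'a measure \<Rightarrow> (('a \<Rightarrow> real) \<Rightarrow> real) \<Rightarrow> ('a \<Rightarrow> real) \<Rightarrow> ('a \<Rightarrow> real) \<Rightarrow> 'a measure \<Rightarrow> bool" where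
  "derivative_equals M F L h N \<longleftrightarrow>
     (\<exists>l. has_DF M F L l) \<and>
     (\<forall>l. has_DF M F L l \<longrightarrow> represents M l h) \<and>
     (\<forall>l D. has_DF M F L l \<and> represents M l D \<longrightarrow> (AE \<omega> in N. D \<omega> = h \<omega>))"

end

theory Submission
  imports Defs
begin

text \<open>A continuous linear functional on \<open>L^1_0\<close> of a probability space is integration against
  a bounded function: extended to \<open>L^1\<close> by \<open>k \<mapsto> \<lambda> (k - E k) + 2 C E k\<close>, with \<open>C\<close> its norm,
  it becomes nonnegative on indicators, hence a measure dominated by \<open>4 C P\<close>, and its
  Radon-Nikodym density minus its mean represents the functional. Applied to the derivative
  composed with \<open>k \<mapsto> k \<circ> \<xi>\<close>, this gives a bounded Borel \<open>g\<close> on the state space.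

  Now let \<open>\<xi>'\<close> have the same law \<open>\<mu>\<close> under another probability \<open>M\<close>, and let \<open>L\<close> be a density on
  \<open>M\<close>. The law of \<open>\<xi>'\<close> under \<open>L M\<close> has a density \<open>k\<close> with respect to \<open>\<mu>\<close>, and \<open>k \<circ> \<xi>\<close> is a
  density for \<open>Q\<^sub>L\<close> with the same image law, closer to \<open>1\<close> in \<open>L^1\<close> than \<open>L\<close> (as \<open>k \<circ> \<xi>'\<close> is
  the conditional expectation of \<open>L\<close> given \<open>\<xi>'\<close>), and with
  \<open>E[g(\<xi>) (k(\<xi>) - 1)] = E[g(\<xi>') (L - 1)]\<close>. So the first-order expansion at \<open>1\<close> carries over,
  with derivative \<open>g(\<xi>')\<close>. The derivative is unique, since two derivatives agree on the bounded
  directions \<open>1 + t \<eta>\<close>, and a continuous functional vanishing on bounded elements vanishes: its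
  representing function is one of them.\<close>

section \<open>Continuous linear functionals on \<open>L^1_0\<close>\<close>

lemma integrable_bounded_mult:
  fixes f g :: "'a \<Rightarrow> real"
  assumes "integrable M f" "g \<in> borel_measurable M" "AE x in M. \<bar>g x\<bar> \<le> B"
  shows "integrable M (\<lambda>x. g x * f x)"
proof (rule Bochner_Integration.integrable_bound[where f="\<lambda>x. B * f x"])
  show "integrable M (\<lambda>x. B * f x)" using assms(1) by simp
  show "(\<lambda>x. g x * f x) \<in> borel_measurable M" using assms by measurable
  show "AE x in M. norm (g x * f x) \<le> norm (B * f x)"
    using assms(3) by eventually_elim (auto simp: abs_mult intro: mult_right_mono)
qed

lemma tendsto_L1_dominated:
  fixes f w :: "'a \<Rightarrow> real"
  assumes "\<And>i. integrable M (s i)" "integrable M f" "integrable M w"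
    and "\<And>x. x \<in> space M \<Longrightarrow> (\<lambda>i. s i x) \<longlonglongrightarrow> f x"
    and "\<And>i x. x \<in> space M \<Longrightarrow> \<bar>s i x\<bar> \<le> w x"
  shows "(\<lambda>i. \<integral>x. \<bar>s i x - f x\<bar> \<partial>M) \<longlonglongrightarrow> 0"
proof -
  have "(\<lambda>i. \<integral>x. \<bar>s i x - f x\<bar> \<partial>M) \<longlonglongrightarrow> (\<integral>x. 0 \<partial>M)"
  proof (rule integral_dominated_convergence[where w="\<lambda>x. w x + \<bar>f x\<bar>"])
    show "AE x in M. (\<lambda>i. \<bar>s i x - f x\<bar>) \<longlonglongrightarrow> 0"
      using assms(4) by (intro AE_I2 tendsto_rabs_zero) (simp add: LIM_zero)
    show "AE x in M. norm \<bar>s i x - f x\<bar> \<le> w x + \<bar>f x\<bar>" for i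
    proof (rule AE_I2)
      fix x assume "x \<in> space M"
      with assms(5)[of x i] show "norm \<bar>s i x - f x\<bar> \<le> w x + \<bar>f x\<bar>" by simp
    qed
  qed (use assms(1-3) in auto)
  then show ?thesis by simp
qed

lemma (in prob_space) L1_0_centered: "integrable M a \<Longrightarrow> (\<lambda>x. a x - expectation a) \<in> L1_0 M"
  by (auto simp: L1_0_def prob_space)

lemma L1_norm_nonneg: "0 \<le> L1_norm M \<eta>"
  by (simp add: L1_norm_def)

lemma cont_lin_L1_0_add:
  "cont_lin_L1_0 M l \<Longrightarrow> a \<in> L1_0 M \<Longrightarrow> b \<in> L1_0 M \<Longrightarrow> l (\<lambda>x. a x + b x) = l a + l b"
  by (auto simp: cont_lin_L1_0_def)

lemma cont_lin_L1_0_scale: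
  "cont_lin_L1_0 M l \<Longrightarrow> a \<in> L1_0 M \<Longrightarrow> l (\<lambda>x. c * a x) = c * l a"
  by (auto simp: cont_lin_L1_0_def)

lemma cont_lin_L1_0_bound:
  assumes "cont_lin_L1_0 M l"
  obtains C where "0 \<le> C" "\<And>\<eta>. \<eta> \<in> L1_0 M \<Longrightarrow> \<bar>l \<eta>\<bar> \<le> C * L1_norm M \<eta>"
proof -
  obtain C where C: "\<forall>\<eta>\<in>L1_0 M. \<bar>l \<eta>\<bar> \<le> C * L1_norm M \<eta>"
    using assms by (auto simp: cont_lin_L1_0_def)
  have "\<bar>l \<eta>\<bar> \<le> max C 0 * L1_norm M \<eta>" if "\<eta> \<in> L1_0 M" for \<eta>
    using C that L1_norm_nonneg[of M \<eta>] by (meson max.cobounded1 mult_right_mono order_trans)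
  then show thesis by (intro that[of "max C 0"]) auto
qed

lemma cont_lin_L1_0_minus:
  assumes l1: "cont_lin_L1_0 M l1" and l2: "cont_lin_L1_0 M l2"
  shows "cont_lin_L1_0 M (\<lambda>\<eta>. l1 \<eta> - l2 \<eta>)"
proof -
  obtain C1 where "\<And>\<eta>. \<eta> \<in> L1_0 M \<Longrightarrow> \<bar>l1 \<eta>\<bar> \<le> C1 * L1_norm M \<eta>"
    using cont_lin_L1_0_bound[OF l1] by blast
  moreover obtain C2 where "\<And>\<eta>. \<eta> \<in> L1_0 M \<Longrightarrow> \<bar>l2 \<eta>\<bar> \<le> C2 * L1_norm M \<eta>"
    using cont_lin_L1_0_bound[OF l2] by blast
  ultimately have "\<forall>\<eta>\<in>L1_0 M. \<bar>l1 \<eta> - l2 \<eta>\<bar> \<le> (C1 + C2) * L1_norm M \<eta>"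
    by (smt (verit, best) distrib_right)
  with l1 l2 show ?thesis
    unfolding cont_lin_L1_0_def by (auto simp: algebra_simps intro!: exI[of _ "C1 + C2"])
qed

lemma cont_lin_L1_0_integral_mult:
  assumes [measurable]: "h \<in> borel_measurable M" and h_bound: "\<And>\<omega>. \<bar>h \<omega>\<bar> \<le> B"
  shows "cont_lin_L1_0 M (\<lambda>\<eta>. \<integral>\<omega>. h \<omega> * \<eta> \<omega> \<partial>M)"
proof -
  have int: "integrable M (\<lambda>\<omega>. h \<omega> * \<eta> \<omega>)" if "\<eta> \<in> L1_0 M" for \<eta>
    using that h_bound by (intro integrable_bounded_mult) (auto simp: L1_0_def)
  have "\<bar>\<integral>\<omega>. h \<omega> * \<eta> \<omega> \<partial>M\<bar> \<le> B * L1_norm M \<eta>" if \<eta>: "\<eta> \<in> L1_0 M" for \<eta>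
  proof -
    have "\<bar>\<integral>\<omega>. h \<omega> * \<eta> \<omega> \<partial>M\<bar> \<le> (\<integral>\<omega>. \<bar>h \<omega> * \<eta> \<omega>\<bar> \<partial>M)"
      using integral_norm_bound[of M "\<lambda>\<omega>. h \<omega> * \<eta> \<omega>"] by simp
    also have "\<dots> \<le> (\<integral>\<omega>. B * \<bar>\<eta> \<omega>\<bar> \<partial>M)"
      using integrable_abs[OF int[OF \<eta>]] \<eta> h_bound
      by (intro integral_mono) (auto simp: L1_0_def abs_mult intro: mult_right_mono)
    finally show ?thesis by (simp add: L1_norm_def)
  qed
  then show ?thesis
    unfolding cont_lin_L1_0_def using int
    by (auto simp: distrib_left mult.left_commute L1_0_def)
qed

lemma L1_0_distr_measurable: "k \<in> L1_0 (distr M borel \<xi>) \<Longrightarrow> k \<in> borel_measurable borel"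
  by (auto simp: L1_0_def dest: borel_measurable_integrable)

lemma L1_0_comp:
  assumes [measurable]: "\<xi> \<in> measurable M borel" and k: "k \<in> L1_0 (distr M borel \<xi>)"
  shows "(\<lambda>\<omega>. k (\<xi> \<omega>)) \<in> L1_0 M"
proof -
  have [measurable]: "k \<in> borel_measurable borel"
    using k by (rule L1_0_distr_measurable)
  show ?thesis
    using k by (simp add: L1_0_def integrable_distr_eq integral_distr)
qed

lemma L1_norm_comp:
  assumes [measurable]: "\<xi> \<in> measurable M borel" "k \<in> borel_measurable borel"
  shows "L1_norm M (\<lambda>\<omega>. k (\<xi> \<omega>)) = L1_norm (distr M borel \<xi>) k"
  by (simp add: L1_norm_def integral_distr)

lemma cont_lin_L1_0_comp:
  assumes \<xi>: "\<xi> \<in> measurable M borel" and l: "cont_lin_L1_0 M l"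
  shows "cont_lin_L1_0 (distr M borel \<xi>) (\<lambda>k. l (\<lambda>\<omega>. k (\<xi> \<omega>)))"
proof -
  obtain C where C: "\<And>\<eta>. \<eta> \<in> L1_0 M \<Longrightarrow> \<bar>l \<eta>\<bar> \<le> C * L1_norm M \<eta>"
    using cont_lin_L1_0_bound[OF l] by blast
  have "\<bar>l (\<lambda>\<omega>. k (\<xi> \<omega>))\<bar> \<le> C * L1_norm (distr M borel \<xi>) k" if k: "k \<in> L1_0 (distr M borel \<xi>)" for k
  proof -
    have "k \<in> borel_measurable borel"
      using k by (rule L1_0_distr_measurable)
    then show ?thesis
      using C[OF L1_0_comp[OF \<xi> k]] L1_norm_comp[OF \<xi>] by simp
  qed
  with l show ?thesis
    unfolding cont_lin_L1_0_def using L1_0_comp[OF \<xi>] by auto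
qed

lemma (in finite_measure) AE_le_const_if_nn_integral_le:
  fixes r :: "'a \<Rightarrow> ennreal"
  assumes r[measurable]: "r \<in> borel_measurable M" and c: "0 \<le> c"
    and le: "\<And>A. A \<in> sets M \<Longrightarrow> (\<integral>\<^sup>+x. r x * indicator A x \<partial>M) \<le> ennreal (c * measure M A)"
  shows "AE x in M. r x \<le> ennreal c"
proof -
  define E where "E = {x \<in> space M. ennreal c < r x}"
  have E[measurable]: "E \<in> sets M" unfolding E_def by measurable
  have "AE x in M. r x * indicator E x \<le> ennreal c * indicator E x"
  proof (rule ccontr)
    assume "\<not> (AE x in M. r x * indicator E x \<le> ennreal c * indicator E x)"
    moreover have "(\<integral>\<^sup>+x. ennreal c * indicator E x \<partial>M) \<noteq> \<infinity>"
      by (simp add: nn_integral_cmult_indicator ennreal_mult_eq_top_iff)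
    moreover have "AE x in M. ennreal c * indicator E x \<le> r x * indicator E x"
      by (intro AE_I2) (auto simp: E_def indicator_def less_imp_le)
    ultimately have "(\<integral>\<^sup>+x. ennreal c * indicator E x \<partial>M) < (\<integral>\<^sup>+x. r x * indicator E x \<partial>M)"
      by (intro nn_integral_less) auto
    also have "\<dots> \<le> ennreal (c * measure M E)" by (rule le[OF E])
    also have "\<dots> = (\<integral>\<^sup>+x. ennreal c * indicator E x \<partial>M)"
      using c by (simp add: nn_integral_cmult_indicator emeasure_eq_measure ennreal_mult)
    finally show False by simp
  qed
  then show ?thesis
    using AE_space
  proof eventually_elim
    case (elim x)
    then show ?case by (cases "x \<in> E") (auto simp: E_def not_less)
  qed
qed

locale L1_0_functional = prob_space +
  fixes lam :: "('a \<Rightarrow> real) \<Rightarrow> real" and C :: real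
  assumes cont_lin: "cont_lin_L1_0 M lam" and C_nonneg: "0 \<le> C"
    and lam_bound: "\<And>\<eta>. \<eta> \<in> L1_0 M \<Longrightarrow> \<bar>lam \<eta>\<bar> \<le> C * L1_norm M \<eta>"
begin

text \<open>The shift \<open>2 C E k\<close> makes this extension of \<open>lam\<close> to \<open>L^1\<close> nonnegative on indicators,
  because \<open>\<bar>lam (1\<^sub>A - P A)\<bar> \<le> 2 C P A\<close>.\<close>
definition pos_ext :: "('a \<Rightarrow> real) \<Rightarrow> real" where
  "pos_ext k = lam (\<lambda>x. k x - expectation k) + 2 * C * expectation k"

lemma pos_ext_L1_0: "a \<in> L1_0 M \<Longrightarrow> pos_ext a = lam a"
  by (simp add: pos_ext_def L1_0_def)

lemma pos_ext_add:
  assumes a: "integrable M a" and b: "integrable M b"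
  shows "pos_ext (\<lambda>x. a x + b x) = pos_ext a + pos_ext b"
proof -
  have "(\<lambda>x. a x + b x - expectation (\<lambda>x. a x + b x)) =
        (\<lambda>x. (a x - expectation a) + (b x - expectation b))"
    using a b by auto
  then show ?thesis
    using cont_lin_L1_0_add[OF cont_lin L1_0_centered[OF a] L1_0_centered[OF b]] a b
    by (simp add: pos_ext_def algebra_simps)
qed

lemma pos_ext_scale: "integrable M a \<Longrightarrow> pos_ext (\<lambda>x. c * a x) = c * pos_ext a"
  using cont_lin_L1_0_scale[OF cont_lin L1_0_centered, of a c]
  by (simp add: pos_ext_def right_diff_distrib algebra_simps)

lemma pos_ext_diff:
  assumes "integrable M a" "integrable M b"
  shows "pos_ext (\<lambda>x. a x - b x) = pos_ext a - pos_ext b"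
  using pos_ext_add[of a "\<lambda>x. (-1) * b x"] pos_ext_scale[of b "-1"] assms by simp

lemma lam_centered_bound:
  assumes a: "integrable M a"
  shows "\<bar>lam (\<lambda>x. a x - expectation a)\<bar> \<le> 2 * C * (\<integral>x. \<bar>a x\<bar> \<partial>M)"
proof -
  have "L1_norm M (\<lambda>x. a x - expectation a) \<le> (\<integral>x. \<bar>a x\<bar> + \<bar>expectation a\<bar> \<partial>M)"
    unfolding L1_norm_def using a by (intro integral_mono) auto
  also have "\<dots> \<le> 2 * (\<integral>x. \<bar>a x\<bar> \<partial>M)"
    using a integral_norm_bound[of M a] by (simp add: prob_space)
  finally have "C * L1_norm M (\<lambda>x. a x - expectation a) \<le> C * (2 * (\<integral>x. \<bar>a x\<bar> \<partial>M))"
    using C_nonneg by (rule mult_left_mono)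
  then show ?thesis
    using lam_bound[OF L1_0_centered[OF a]] by (simp add: mult_ac)
qed

lemma pos_ext_abs_le:
  assumes a: "integrable M a"
  shows "\<bar>pos_ext a\<bar> \<le> 4 * C * (\<integral>x. \<bar>a x\<bar> \<partial>M)"
proof -
  have "\<bar>expectation a\<bar> \<le> (\<integral>x. \<bar>a x\<bar> \<partial>M)"
    using integral_norm_bound[of M a] by simp
  then have "\<bar>2 * C * expectation a\<bar> \<le> 2 * C * (\<integral>x. \<bar>a x\<bar> \<partial>M)"
    using C_nonneg by (simp add: abs_mult mult_left_mono)
  then show ?thesis
    using lam_centered_bound[OF a] unfolding pos_ext_def by linarith
qed

lemma pos_ext_tendsto:
  assumes s: "\<And>i. integrable M (s i)" and f: "integrable M f"
    and lim: "(\<lambda>i. \<integral>x. \<bar>s i x - f x\<bar> \<partial>M) \<longlonglongrightarrow> 0"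
  shows "(\<lambda>i. pos_ext (s i)) \<longlonglongrightarrow> pos_ext f"
proof -
  have "(\<lambda>i. pos_ext (s i) - pos_ext f) \<longlonglongrightarrow> 0"
  proof (rule Lim_null_comparison)
    have "norm (pos_ext (s i) - pos_ext f) \<le> 4 * C * (\<integral>x. \<bar>s i x - f x\<bar> \<partial>M)" for i
      using pos_ext_diff[OF s f, of i] pos_ext_abs_le[of "\<lambda>x. s i x - f x"] s f by simp
    then show "\<forall>\<^sub>F i in sequentially. norm (pos_ext (s i) - pos_ext f) \<le> 4 * C * (\<integral>x. \<bar>s i x - f x\<bar> \<partial>M)"
      by simp
    show "(\<lambda>i. 4 * C * (\<integral>x. \<bar>s i x - f x\<bar> \<partial>M)) \<longlonglongrightarrow> 0"
      using tendsto_mult_right_zero[OF lim] .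
  qed
  then show ?thesis by (simp add: LIM_zero_iff)
qed

lemma integrable_indicator_events: "A \<in> sets M \<Longrightarrow> integrable M (indicator A :: 'a \<Rightarrow> real)"
  by (simp add: integrable_indicator_iff less_top[symmetric])

lemma pos_ext_indicator_bounds:
  assumes A: "A \<in> sets M"
  shows "0 \<le> pos_ext (indicator A) \<and> pos_ext (indicator A) \<le> 4 * C * prob A"
proof -
  have "\<bar>lam (\<lambda>x. indicator A x - prob A)\<bar> \<le> 2 * C * prob A"
    using lam_centered_bound[OF integrable_indicator_events[OF A]] A by simp
  then show ?thesis
    using A unfolding pos_ext_def by (simp add: abs_le_iff)
qed

lemma pos_ext_zero: "pos_ext (\<lambda>x. 0) = 0"
  using pos_ext_scale[of "\<lambda>x. 0" 0] by simp

lemma pos_ext_indicator_sums: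
  assumes A: "range A \<subseteq> sets M" and dj: "disjoint_family A"
  shows "(\<lambda>i. pos_ext (indicator (A i))) sums pos_ext (indicator (\<Union>i. A i))"
proof -
  have partial: "(\<Sum>i<n. pos_ext (indicator (A i))) = pos_ext (indicator (\<Union>i<n. A i))" for n
  proof (induction n)
    case 0
    then show ?case using pos_ext_zero by (simp add: fun_eq_iff)
  next
    case (Suc n)
    have "(\<Union>i<n. A i) \<inter> A n = {}"
      using dj by (auto simp: disjoint_family_on_def) (metis IntI empty_iff less_irrefl)
    then have "indicator (\<Union>i<Suc n. A i) = (\<lambda>x. indicator (\<Union>i<n. A i) x + indicator (A n) x :: real)"
      by (auto simp: lessThan_Suc indicator_def fun_eq_iff)
    moreover have "(\<Union>i<n. A i) \<in> sets M" "A n \<in> sets M"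
      using A by auto
    ultimately show ?case
      using Suc by (simp add: pos_ext_add integrable_indicator_events)
  qed
  have "(\<Union>i<n. A i) \<in> sets M" "(\<Union>i. A i) \<in> sets M" for n
    using A by auto
  then have "(\<lambda>n. pos_ext (indicator (\<Union>i<n. A i))) \<longlonglongrightarrow> pos_ext (indicator (\<Union>i. A i))"
    by (intro pos_ext_tendsto tendsto_L1_dominated[where w="\<lambda>x. 1"])
      (auto intro: LIMSEQ_indicator_UN integrable_indicator_events)
  then show ?thesis
    unfolding sums_def partial .
qed

definition ext_measure :: "'a measure" where
  "ext_measure = measure_of (space M) (sets M) (\<lambda>A. ennreal (pos_ext (indicator A)))"

lemma sets_ext_measure [simp]: "sets ext_measure = sets M"
  by (simp add: ext_measure_def)

lemma emeasure_ext_measure: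
  "A \<in> sets M \<Longrightarrow> emeasure ext_measure A = ennreal (pos_ext (indicator A))"
  unfolding ext_measure_def
proof (rule emeasure_measure_of_sigma[OF sets.sigma_algebra_axioms])
  show "positive (sets M) (\<lambda>A. ennreal (pos_ext (indicator A)))"
    using pos_ext_zero by (simp add: positive_def indicator_def[abs_def])
  show "countably_additive (sets M) (\<lambda>A. ennreal (pos_ext (indicator A)))"
    unfolding countably_additive_def
    using pos_ext_indicator_sums pos_ext_indicator_bounds
    by (intro allI impI suminf_ennreal_eq) auto
qed

lemma absolutely_continuous_ext_measure: "absolutely_continuous M ext_measure"
  unfolding absolutely_continuous_def
proof
  fix A assume "A \<in> null_sets M"
  then show "A \<in> null_sets ext_measure"
    using pos_ext_indicator_bounds[of A] emeasure_ext_measure[of A]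
    by (auto simp: null_sets_def measure_def)
qed

lemma pos_ext_indicator_density:
  obtains r where "r \<in> borel_measurable M" "\<And>x. 0 \<le> r x \<and> r x \<le> 4 * C"
    "\<And>A. A \<in> sets M \<Longrightarrow> pos_ext (indicator A) = (\<integral>x. r x * indicator A x \<partial>M)"
proof -
  define r where "r = RN_deriv M ext_measure"
  have r_meas[measurable]: "r \<in> borel_measurable M" unfolding r_def by simp
  have density_r: "density M r = ext_measure"
    unfolding r_def by (rule density_RN_deriv[OF absolutely_continuous_ext_measure]) simp
  have emeasure_r: "ennreal (pos_ext (indicator A)) = (\<integral>\<^sup>+x. r x * indicator A x \<partial>M)"
    if A: "A \<in> sets M" for A
    using emeasure_ext_measure[OF A] emeasure_density[OF r_meas A] unfolding density_r by simp
  have "AE x in M. r x \<le> ennreal (4 * C)"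
  proof (rule AE_le_const_if_nn_integral_le)
    show "(\<integral>\<^sup>+x. r x * indicator A x \<partial>M) \<le> ennreal (4 * C * prob A)" if A: "A \<in> sets M" for A
      using emeasure_r[OF A, symmetric] pos_ext_indicator_bounds[OF A] by (simp add: ennreal_leI)
  qed (use C_nonneg in auto)
  then have r_eq: "AE x in M. r x = ennreal (min (enn2real (r x)) (4 * C))"
  proof eventually_elim
    case (elim x)
    have "r x < top" by (rule le_less_trans[OF elim ennreal_less_top])
    then have "r x = ennreal (enn2real (r x))" by simp
    moreover have "enn2real (r x) \<le> 4 * C"
      using enn2real_mono[OF elim ennreal_less_top] C_nonneg by simp
    ultimately show ?case by (simp add: min_absorb1)
  qed
  define rr where "rr x = min (enn2real (r x)) (4 * C)" for x
  have rr_meas: "rr \<in> borel_measurable M" unfolding rr_def by measurable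
  have rr_bounds: "0 \<le> rr x \<and> rr x \<le> 4 * C" for x unfolding rr_def using C_nonneg by auto
  have "pos_ext (indicator A) = (\<integral>x. rr x * indicator A x \<partial>M)" if A: "A \<in> sets M" for A
  proof -
    have "ennreal (pos_ext (indicator A)) = (\<integral>\<^sup>+x. ennreal (rr x * indicator A x) \<partial>M)"
      unfolding emeasure_r[OF A] using r_eq
      by (intro nn_integral_cong_AE) (auto simp: rr_def indicator_def)
    also have "\<dots> = ennreal (\<integral>x. rr x * indicator A x \<partial>M)"
      using A rr_meas rr_bounds
      by (intro nn_integral_eq_integral integrable_bounded_mult[where B="4 * C"])
        (auto intro: integrable_indicator_events)
    finally show ?thesis
      using pos_ext_indicator_bounds[OF A] rr_bounds
      by (subst (asm) ennreal_inj) (auto intro!: integral_nonneg)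
  qed
  with rr_meas rr_bounds show thesis by (rule that)
qed

lemma pos_ext_eq_integral:
  obtains r where "r \<in> borel_measurable M" "\<And>x. \<bar>r x\<bar> \<le> 4 * C"
    "\<And>k. integrable M k \<Longrightarrow> pos_ext k = (\<integral>x. r x * k x \<partial>M)"
proof -
  obtain r where r[measurable]: "r \<in> borel_measurable M" and r_bounds: "\<And>x. 0 \<le> r x \<and> r x \<le> 4 * C"
    and r_ind: "\<And>A. A \<in> sets M \<Longrightarrow> pos_ext (indicator A) = (\<integral>x. r x * indicator A x \<partial>M)"
    using pos_ext_indicator_density by blast
  have r_abs: "\<bar>r x\<bar> \<le> 4 * C" for x using r_bounds[of x] by simp
  have r_int: "integrable M (\<lambda>x. r x * k x)" if "integrable M k" for k
    using integrable_bounded_mult[OF that r, of "4 * C"] r_abs by simp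
  have "pos_ext k = (\<integral>x. r x * k x \<partial>M)" if "integrable M k" for k
    using that
  proof (induction rule: integrable_induct)
    case (base A c)
    then show ?case
      using pos_ext_scale[of "indicator A" c] r_ind[of A] by (simp add: mult_ac)
  next
    case (add f g)
    then show ?case
      using pos_ext_add r_int by (simp add: distrib_left)
  next
    case (lim f s)
    have "(\<lambda>i. pos_ext (s i)) \<longlonglongrightarrow> pos_ext f"
      using lim by (intro pos_ext_tendsto tendsto_L1_dominated[where w="\<lambda>x. 2 * \<bar>f x\<bar>"]) auto
    moreover have "(\<lambda>i. \<integral>x. r x * s i x \<partial>M) \<longlonglongrightarrow> (\<integral>x. r x * f x \<partial>M)"
    proof (rule integral_dominated_convergence[where w="\<lambda>x. 4 * C * (2 * \<bar>f x\<bar>)"])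
      show "AE x in M. norm (r x * s i x) \<le> 4 * C * (2 * \<bar>f x\<bar>)" for i
      proof (rule AE_I2)
        fix x assume x: "x \<in> space M"
        have "\<bar>r x\<bar> * \<bar>s i x\<bar> \<le> (4 * C) * (2 * \<bar>f x\<bar>)"
          using r_abs[of x] lim.hyps(3)[OF x] by (intro mult_mono) auto
        then show "norm (r x * s i x) \<le> 4 * C * (2 * \<bar>f x\<bar>)" by (simp add: abs_mult)
      qed
      show "AE x in M. (\<lambda>i. r x * s i x) \<longlonglongrightarrow> r x * f x"
        using lim.hyps(2) by (intro AE_I2 tendsto_mult_left) auto
    qed (use lim in auto)
    ultimately show ?case
      using lim.IH LIMSEQ_unique by simp
  qed
  with r r_abs show thesis by (rule that)
qed

end

theorem cont_lin_L1_0_representation: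
  assumes M: "prob_space M" and lam: "cont_lin_L1_0 M lam"
  obtains g where "g \<in> borel_measurable M" "bounded (range g)" "integral\<^sup>L M g = 0"
    "\<And>k. k \<in> L1_0 M \<Longrightarrow> lam k = (\<integral>x. g x * k x \<partial>M)"
proof -
  obtain C where C: "0 \<le> C" "\<And>\<eta>. \<eta> \<in> L1_0 M \<Longrightarrow> \<bar>lam \<eta>\<bar> \<le> C * L1_norm M \<eta>"
    using cont_lin_L1_0_bound[OF lam] by blast
  interpret L1_0_functional M lam C
    using M lam C by (simp add: L1_0_functional_def L1_0_functional_axioms_def)
  obtain r where r[measurable]: "r \<in> borel_measurable M" and r_abs: "\<And>x. \<bar>r x\<bar> \<le> 4 * C"
    and r_int: "\<And>k. integrable M k \<Longrightarrow> pos_ext k = (\<integral>x. r x * k x \<partial>M)"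
    using pos_ext_eq_integral by blast
  define c where "c = expectation r"
  have "integrable M r"
    using r_abs by (intro integrable_const_bound[where B="4 * C"]) auto
  then have centered: "integral\<^sup>L M (\<lambda>x. r x - c) = 0"
    by (simp add: c_def prob_space)
  have "lam k = (\<integral>x. (r x - c) * k x \<partial>M)" if k: "k \<in> L1_0 M" for k
  proof -
    have ki: "integrable M k" and k0: "expectation k = 0"
      using k by (auto simp: L1_0_def)
    have rk: "integrable M (\<lambda>x. r x * k x)"
      using integrable_bounded_mult[OF ki r, of "4 * C"] r_abs by simp
    have "lam k = pos_ext k" using pos_ext_L1_0[OF k] by simp
    also have "\<dots> = (\<integral>x. r x * k x \<partial>M) - c * expectation k" using r_int[OF ki] k0 by simp
    also have "\<dots> = (\<integral>x. (r x - c) * k x \<partial>M)"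
      using ki rk by (simp add: left_diff_distrib)
    finally show ?thesis .
  qed
  moreover have "\<bar>r x - c\<bar> \<le> 4 * C + \<bar>c\<bar>" for x
    using r_abs[of x] by linarith
  then have "bounded (range (\<lambda>x. r x - c))"
    by (intro boundedI) auto
  ultimately show thesis
    using centered by (intro that[of "\<lambda>x. r x - c"]) auto
qed

section \<open>Uniqueness of the derivative\<close>

lemma AE_eq_0_if_integral_square_eq_0:
  fixes h :: "'a \<Rightarrow> real"
  assumes "finite_measure M" and h: "h \<in> borel_measurable M" and B: "AE x in M. \<bar>h x\<bar> \<le> B"
    and sq: "(\<integral>x. h x * h x \<partial>M) = 0"
  shows "AE x in M. h x = 0"
proof -
  interpret finite_measure M by fact
  have "integrable M h"
    using h B by (intro integrable_const_bound[where B=B]) auto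
  then have "integrable M (\<lambda>x. h x * h x)"
    by (rule integrable_bounded_mult[OF _ h B])
  then have "AE x in M. h x * h x = 0"
    using sq by (subst (asm) integral_nonneg_eq_0_iff_AE) auto
  then show ?thesis by eventually_elim simp
qed

lemma cont_lin_L1_0_eq_0_if_bounded:
  assumes M: "prob_space M" and d: "cont_lin_L1_0 M d"
    and bounded_0: "\<And>\<eta> B. \<eta> \<in> L1_0 M \<Longrightarrow> (\<And>x. x \<in> space M \<Longrightarrow> \<bar>\<eta> x\<bar> \<le> B) \<Longrightarrow> d \<eta> = 0"
    and \<eta>: "\<eta> \<in> L1_0 M"
  shows "d \<eta> = 0"
proof -
  interpret prob_space M by fact
  obtain g where g[measurable]: "g \<in> borel_measurable M" and "bounded (range g)"
    and g0: "expectation g = 0" and rep: "\<And>k. k \<in> L1_0 M \<Longrightarrow> d k = (\<integral>x. g x * k x \<partial>M)"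
    using cont_lin_L1_0_representation[OF M d] by blast
  then obtain B where B: "\<And>x. \<bar>g x\<bar> \<le> B"
    by (auto simp: bounded_iff)
  have "g \<in> L1_0 M"
    using B g0 by (auto simp: L1_0_def intro!: integrable_const_bound[where B=B])
  then have "(\<integral>x. g x * g x \<partial>M) = 0"
    using bounded_0[of g B] B rep by simp
  then have "AE x in M. g x = 0"
    using B by (intro AE_eq_0_if_integral_square_eq_0) auto
  then have "AE x in M. g x * \<eta> x = 0"
    by eventually_elim simp
  from integral_eq_zero_AE[OF this] show ?thesis
    using rep[OF \<eta>] by simp
qed

lemma dens_set_one_plus:
  assumes "prob_space M" and \<eta>: "\<eta> \<in> L1_0 M" and B: "\<And>x. x \<in> space M \<Longrightarrow> \<bar>\<eta> x\<bar> \<le> B"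
    and t: "0 \<le> t" "t * B < 1"
  shows "(\<lambda>x. 1 + t * \<eta> x) \<in> dens_set M"
proof -
  interpret prob_space M by fact
  have "AE x in M. 0 < 1 + t * \<eta> x"
  proof (rule AE_I2)
    fix x assume "x \<in> space M"
    then have "\<bar>t * \<eta> x\<bar> \<le> t * B"
      using B t by (simp add: abs_mult mult_left_mono)
    then show "0 < 1 + t * \<eta> x" using t by linarith
  qed
  then show ?thesis
    using \<eta> by (simp add: dens_set_def L1_0_def prob_space)
qed

lemma has_DF_at_1_along_bounded:
  assumes M: "prob_space M" and l: "has_DF M F (\<lambda>_. 1) l" and \<epsilon>: "0 < \<epsilon>"
    and \<eta>: "\<eta> \<in> L1_0 M" and B: "\<And>x. x \<in> space M \<Longrightarrow> \<bar>\<eta> x\<bar> \<le> B"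
  obtains t0 where "0 < t0" "\<And>t. 0 < t \<Longrightarrow> t < t0 \<Longrightarrow>
      \<bar>F (\<lambda>x. 1 + t * \<eta> x) - F (\<lambda>_. 1) - t * l \<eta>\<bar> \<le> \<epsilon> * (t * L1_norm M \<eta>)"
proof -
  obtain \<delta> where \<delta>: "0 < \<delta>" and approx: "\<forall>L''\<in>dens_set M. L1_norm M (\<lambda>x. L'' x - 1) < \<delta> \<longrightarrow>
      \<bar>F L'' - F (\<lambda>_. 1) - l (\<lambda>x. L'' x - 1)\<bar> \<le> \<epsilon> * L1_norm M (\<lambda>x. L'' x - 1)"
    using l \<epsilon> unfolding has_DF_def by blast
  define n where "n = L1_norm M \<eta>"
  have n: "0 \<le> n" by (simp add: n_def L1_norm_nonneg)
  define t0 where "t0 = min (1 / (\<bar>B\<bar> + 1)) (\<delta> / (n + 1))"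
  have "0 < t0" using \<delta> n by (simp add: t0_def)
  moreover have "\<bar>F (\<lambda>x. 1 + t * \<eta> x) - F (\<lambda>_. 1) - t * l \<eta>\<bar> \<le> \<epsilon> * (t * n)"
    if t: "0 < t" "t < t0" for t
  proof -
    have "t * (\<bar>B\<bar> + 1) < 1" "t * (n + 1) < \<delta>"
      using t n by (simp_all add: t0_def pos_less_divide_eq)
    moreover have "t * B \<le> t * (\<bar>B\<bar> + 1)" "t * n \<le> t * (n + 1)"
      using t by (simp_all add: mult_left_mono)
    ultimately have "t * B < 1" and small: "t * n < \<delta>" by linarith+
    then have "(\<lambda>x. 1 + t * \<eta> x) \<in> dens_set M"
      using t by (intro dens_set_one_plus[OF M \<eta> B]) auto
    moreover have "L1_norm M (\<lambda>x. 1 + t * \<eta> x - 1) = t * n"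
      using t by (simp add: L1_norm_def n_def abs_mult)
    moreover have "l (\<lambda>x. 1 + t * \<eta> x - 1) = t * l \<eta>"
      using cont_lin_L1_0_scale[OF _ \<eta>] l by (simp add: has_DF_def)
    ultimately show ?thesis
      using approx small by auto
  qed
  ultimately show thesis
    unfolding n_def by (rule that)
qed

lemma has_DF_at_1_agree_bounded:
  assumes M: "prob_space M" and l1: "has_DF M F (\<lambda>_. 1) l1" and l2: "has_DF M F (\<lambda>_. 1) l2"
    and \<eta>: "\<eta> \<in> L1_0 M" and B: "\<And>x. x \<in> space M \<Longrightarrow> \<bar>\<eta> x\<bar> \<le> B"
  shows "l1 \<eta> = l2 \<eta>"
proof -
  define n where "n = L1_norm M \<eta>"
  have n: "0 \<le> n" by (simp add: n_def L1_norm_nonneg)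
  have bound: "\<bar>l1 \<eta> - l2 \<eta>\<bar> \<le> 2 * \<epsilon> * n" if \<epsilon>: "0 < \<epsilon>" for \<epsilon>
  proof -
    obtain t1 where t1: "0 < t1" "\<And>t. 0 < t \<Longrightarrow> t < t1 \<Longrightarrow>
        \<bar>F (\<lambda>x. 1 + t * \<eta> x) - F (\<lambda>_. 1) - t * l1 \<eta>\<bar> \<le> \<epsilon> * (t * n)"
      using has_DF_at_1_along_bounded[OF M l1 \<epsilon> \<eta> B] unfolding n_def by blast
    obtain t2 where t2: "0 < t2" "\<And>t. 0 < t \<Longrightarrow> t < t2 \<Longrightarrow>
        \<bar>F (\<lambda>x. 1 + t * \<eta> x) - F (\<lambda>_. 1) - t * l2 \<eta>\<bar> \<le> \<epsilon> * (t * n)"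
      using has_DF_at_1_along_bounded[OF M l2 \<epsilon> \<eta> B] unfolding n_def by blast
    define t where "t = min t1 t2 / 2"
    have t: "0 < t" "t < t1" "t < t2" using t1 t2 by (auto simp: t_def)
    define a where "a = F (\<lambda>x. 1 + t * \<eta> x) - F (\<lambda>_. 1)"
    have "(a - t * l2 \<eta>) - (a - t * l1 \<eta>) = t * (l1 \<eta> - l2 \<eta>)"
      by (simp add: algebra_simps)
    then have "t * \<bar>l1 \<eta> - l2 \<eta>\<bar> = \<bar>(a - t * l2 \<eta>) - (a - t * l1 \<eta>)\<bar>"
      using t by (simp add: abs_mult)
    also have "\<dots> \<le> \<bar>a - t * l2 \<eta>\<bar> + \<bar>a - t * l1 \<eta>\<bar>"
      by (rule abs_triangle_ineq4)
    also have "\<dots> \<le> t * (2 * \<epsilon> * n)"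
      using t1(2)[OF t(1,2)] t2(2)[OF t(1,3)] unfolding a_def by (simp add: algebra_simps)
    finally show ?thesis using t by simp
  qed
  have "\<bar>l1 \<eta> - l2 \<eta>\<bar> \<le> 0 + e" if e: "0 < e" for e
  proof -
    have "\<bar>l1 \<eta> - l2 \<eta>\<bar> \<le> 2 * (e / (2 * (n + 1))) * n"
      using e n by (intro bound) simp
    also have "\<dots> = e * (n / (n + 1))"
      using n by (simp add: field_simps)
    also have "\<dots> \<le> e"
      using e n by (simp add: pos_divide_le_eq algebra_simps)
    finally show ?thesis by simp
  qed
  then show ?thesis
    using field_le_epsilon[of "\<bar>l1 \<eta> - l2 \<eta>\<bar>" 0] by simp
qed

lemma has_DF_at_1_unique:
  assumes M: "prob_space M" and l1: "has_DF M F (\<lambda>_. 1) l1" and l2: "has_DF M F (\<lambda>_. 1) l2"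
    and \<eta>: "\<eta> \<in> L1_0 M"
  shows "l1 \<eta> = l2 \<eta>"
proof -
  have "l1 \<eta> - l2 \<eta> = 0"
  proof (rule cont_lin_L1_0_eq_0_if_bounded[OF M _ _ \<eta>])
    show "cont_lin_L1_0 M (\<lambda>\<eta>. l1 \<eta> - l2 \<eta>)"
      using l1 l2 by (intro cont_lin_L1_0_minus) (auto simp: has_DF_def)
    show "l1 \<eta>' - l2 \<eta>' = 0" if "\<eta>' \<in> L1_0 M" "\<And>x. x \<in> space M \<Longrightarrow> \<bar>\<eta>' x\<bar> \<le> B" for \<eta>' B
      using has_DF_at_1_agree_bounded[OF M l1 l2 that] by simp
  qed
  then show ?thesis by simp
qed

section \<open>Densities of image laws\<close>

lemma prob_space_density_dens_set:
  assumes "L \<in> dens_set M"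
  shows "prob_space (density M (\<lambda>\<omega>. ennreal (L \<omega>)))"
proof (rule prob_spaceI)
  have L: "integrable M L" "AE \<omega> in M. 0 < L \<omega>" "integral\<^sup>L M L = 1"
    using assms by (auto simp: dens_set_def)
  have "emeasure (density M (\<lambda>\<omega>. ennreal (L \<omega>))) (space M) = (\<integral>\<^sup>+ \<omega>. ennreal (L \<omega>) \<partial>M)"
    using L by (auto simp: emeasure_density intro!: nn_integral_cong)
  also have "\<dots> = 1"
    using L by (subst nn_integral_eq_integral) (auto elim: eventually_mono)
  finally show "emeasure (density M (\<lambda>\<omega>. ennreal (L \<omega>))) (space (density M (\<lambda>\<omega>. ennreal (L \<omega>)))) = 1"
    by simp
qed

lemma AE_law_under_iff:
  assumes L: "L \<in> dens_set M" and X[measurable]: "X \<in> measurable M borel"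
    and P: "{x \<in> space borel. P x} \<in> sets borel"
  shows "(AE x in law_under M L X. P x) \<longleftrightarrow> (AE x in distr M borel X. P x)"
proof -
  have L_meas[measurable]: "L \<in> borel_measurable M" and L_pos: "AE \<omega> in M. 0 < L \<omega>"
    using L by (auto simp: dens_set_def)
  have "(AE x in law_under M L X. P x) \<longleftrightarrow> (AE \<omega> in density M (\<lambda>\<omega>. ennreal (L \<omega>)). P (X \<omega>))"
    unfolding law_under_def using P by (intro AE_distr_iff) auto
  also have "\<dots> \<longleftrightarrow> (AE \<omega> in M. 0 < ennreal (L \<omega>) \<longrightarrow> P (X \<omega>))"
    by (rule AE_density) measurable
  also have "\<dots> \<longleftrightarrow> (AE \<omega> in M. P (X \<omega>))"
  proof
    assume "AE \<omega> in M. 0 < ennreal (L \<omega>) \<longrightarrow> P (X \<omega>)"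
    with L_pos show "AE \<omega> in M. P (X \<omega>)" by eventually_elim simp
  qed (auto elim: eventually_mono)
  also have "\<dots> \<longleftrightarrow> (AE x in distr M borel X. P x)"
    using P by (intro AE_distr_iff[symmetric]) auto
  finally show ?thesis .
qed

lemma integral_law_under:
  assumes L: "L \<in> dens_set M" and X[measurable]: "X \<in> measurable M borel"
    and h[measurable]: "h \<in> borel_measurable borel"
  shows "integral\<^sup>L (law_under M L X) h = (\<integral>\<omega>. h (X \<omega>) * L \<omega> \<partial>M)"
proof -
  have [measurable]: "L \<in> borel_measurable M" and "AE \<omega> in M. 0 \<le> L \<omega>"
    using L by (auto simp: dens_set_def elim: eventually_mono)
  then show ?thesis
    unfolding law_under_def by (simp add: integral_distr integral_density mult.commute)
qed

lemma law_under_eq_density: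
  assumes M: "prob_space M" and X[measurable]: "X \<in> measurable M borel" and L: "L \<in> dens_set M"
  obtains k where "k \<in> borel_measurable borel" "\<And>x. 0 \<le> k x"
    "law_under M L X = density (distr M borel X) (\<lambda>x. ennreal (k x))"
proof -
  interpret prob_space M by fact
  define \<mu> where "\<mu> = distr M borel X"
  define \<nu> where "\<nu> = law_under M L X"
  interpret \<mu>: prob_space \<mu> unfolding \<mu>_def by (rule prob_space_distr) simp
  interpret \<nu>: prob_space \<nu> unfolding \<nu>_def law_under_def
    by (intro prob_space.prob_space_distr prob_space_density_dens_set L) simp
  have sets_\<mu>: "sets \<mu> = sets borel" and sets_\<nu>: "sets \<nu> = sets borel"
    by (simp_all add: \<mu>_def \<nu>_def law_under_def)
  have "absolutely_continuous \<mu> \<nu>"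
    unfolding absolutely_continuous_def
  proof
    fix A assume "A \<in> null_sets \<mu>"
    then have A: "A \<in> sets borel" "AE x in \<mu>. x \<notin> A"
      using AE_iff_null_sets[of A \<mu>] by (auto simp: sets_\<mu>)
    then have "AE x in \<nu>. x \<notin> A"
      unfolding \<mu>_def \<nu>_def by (subst AE_law_under_iff[OF L X]) auto
    then show "A \<in> null_sets \<nu>"
      using A AE_iff_null_sets[of A \<nu>] by (simp add: sets_\<nu>)
  qed
  then have density: "density \<mu> (RN_deriv \<mu> \<nu>) = \<nu>"
    by (rule \<mu>.density_RN_deriv) (simp add: sets_\<mu> sets_\<nu>)
  have finite: "AE x in \<mu>. RN_deriv \<mu> \<nu> x \<noteq> \<infinity>"
    by (rule \<mu>.RN_deriv_finite)
      (use \<open>absolutely_continuous \<mu> \<nu>\<close> sets_\<mu> sets_\<nu> in \<open>auto intro: \<nu>.sigma_finite_measure\<close>)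
  define k where "k x = enn2real (RN_deriv \<mu> \<nu> x)" for x
  have "RN_deriv \<mu> \<nu> \<in> borel_measurable borel"
    using borel_measurable_RN_deriv[of \<mu> \<nu>] unfolding measurable_cong_sets[OF sets_\<mu> refl] .
  then have "k \<in> borel_measurable borel" unfolding k_def by measurable
  moreover have "density \<mu> (\<lambda>x. ennreal (k x)) = density \<mu> (RN_deriv \<mu> \<nu>)"
    unfolding k_def using finite
    by (intro density_cong) (auto simp: less_top elim: eventually_mono)
  ultimately show thesis
    using density by (intro that[of k]) (auto simp: k_def \<mu>_def \<nu>_def)
qed

locale law_density = prob_space +
  fixes X :: "'a \<Rightarrow> 'b::topological_space" and L :: "'a \<Rightarrow> real" and k :: "'b \<Rightarrow> real"
  assumes X_meas[measurable]: "X \<in> measurable M borel" and L_dens: "L \<in> dens_set M"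
    and k_meas[measurable]: "k \<in> borel_measurable borel" and k_nonneg: "\<And>x. 0 \<le> k x"
    and law: "law_under M L X = density (distr M borel X) (\<lambda>x. ennreal (k x))"
begin

lemma L_integrable: "integrable M L"
  using L_dens by (simp add: dens_set_def)

lemma integral_comp_mult_L:
  assumes [measurable]: "h \<in> borel_measurable borel"
  shows "(\<integral>\<omega>. h (X \<omega>) * L \<omega> \<partial>M) = (\<integral>x. h x * k x \<partial>distr M borel X)"
  using integral_law_under[OF L_dens X_meas, of h] k_nonneg
  by (simp add: law integral_density mult.commute)

lemma k_dens_set: "k \<in> dens_set (distr M borel X)"
proof -
  interpret \<nu>: prob_space "density (distr M borel X) (\<lambda>x. ennreal (k x))"
    unfolding law[symmetric] law_under_def
    by (intro prob_space.prob_space_distr prob_space_density_dens_set L_dens) simp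
  have "integrable (density (distr M borel X) (\<lambda>x. ennreal (k x))) (\<lambda>_. 1 :: real)"
    by simp
  then have "integrable (distr M borel X) k"
    using k_nonneg by (subst (asm) integrable_density) auto
  moreover have "integral\<^sup>L (distr M borel X) k = 1"
    using integral_comp_mult_L[of "\<lambda>_. 1"] L_dens by (simp add: dens_set_def)
  moreover have "AE x in law_under M L X. k x \<noteq> 0"
    unfolding law using k_nonneg by (subst AE_density) auto
  then have "AE x in distr M borel X. 0 < k x"
    using k_nonneg by (subst (asm) AE_law_under_iff[OF L_dens X_meas])
      (auto simp: less_le elim: eventually_mono)
  ultimately show ?thesis
    by (simp add: dens_set_def)
qed

lemma integral_comp_mult_centered:
  assumes h[measurable]: "h \<in> borel_measurable borel" and h_bound: "\<And>x. \<bar>h x\<bar> \<le> B"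
  shows "(\<integral>\<omega>. h (X \<omega>) * (L \<omega> - 1) \<partial>M) = (\<integral>x. h x * (k x - 1) \<partial>distr M borel X)"
proof -
  interpret \<mu>: prob_space "distr M borel X" by (rule prob_space_distr) simp
  have k_int: "integrable (distr M borel X) k"
    using k_dens_set by (simp add: dens_set_def)
  have hX: "(\<lambda>\<omega>. h (X \<omega>)) \<in> borel_measurable M" and h\<mu>: "h \<in> borel_measurable (distr M borel X)"
    by simp_all
  have "AE \<omega> in M. \<bar>h (X \<omega>)\<bar> \<le> B" "AE x in distr M borel X. \<bar>h x\<bar> \<le> B"
    by (intro AE_I2 h_bound)+
  then have int_M: "integrable M (\<lambda>\<omega>. h (X \<omega>) * L \<omega>)" "integrable M (\<lambda>\<omega>. h (X \<omega>))"
    and int_\<mu>: "integrable (distr M borel X) (\<lambda>x. h x * k x)" "integrable (distr M borel X) h"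
    using integrable_bounded_mult[OF L_integrable hX] integrable_const_bound[OF _ hX]
      integrable_bounded_mult[OF k_int h\<mu>] \<mu>.integrable_const_bound[OF _ h\<mu>]
    by (simp_all only: real_norm_def)
  have "(\<integral>\<omega>. h (X \<omega>) * (L \<omega> - 1) \<partial>M) = (\<integral>\<omega>. h (X \<omega>) * L \<omega> \<partial>M) - (\<integral>\<omega>. h (X \<omega>) \<partial>M)"
    unfolding right_diff_distrib mult_1_right by (rule Bochner_Integration.integral_diff[OF int_M])
  also have "\<dots> = (\<integral>x. h x * k x \<partial>distr M borel X) - (\<integral>x. h x \<partial>distr M borel X)"
    by (simp only: integral_comp_mult_L[OF h] integral_distr[OF X_meas h])
  also have "\<dots> = (\<integral>x. h x * (k x - 1) \<partial>distr M borel X)"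
    unfolding right_diff_distrib mult_1_right by (rule Bochner_Integration.integral_diff[OF int_\<mu>, symmetric])
  finally show ?thesis .
qed

text \<open>Jensen's inequality for the conditional expectation \<open>k \<circ> X = E[L | X]\<close>, tested against
  the sign of \<open>k - 1\<close>.\<close>
lemma L1_norm_density_le: "L1_norm (distr M borel X) (\<lambda>x. k x - 1) \<le> L1_norm M (\<lambda>\<omega>. L \<omega> - 1)"
proof -
  define sgn1 where "sgn1 x = (if 1 \<le> k x then 1 else -1 :: real)" for x
  have [measurable]: "sgn1 \<in> borel_measurable borel" unfolding sgn1_def by measurable
  have sgn1_bound: "\<bar>sgn1 x\<bar> \<le> 1" for x by (simp add: sgn1_def)
  have "L1_norm (distr M borel X) (\<lambda>x. k x - 1) = (\<integral>x. sgn1 x * (k x - 1) \<partial>distr M borel X)"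
    unfolding L1_norm_def by (rule Bochner_Integration.integral_cong) (auto simp: sgn1_def)
  also have "\<dots> = (\<integral>\<omega>. sgn1 (X \<omega>) * (L \<omega> - 1) \<partial>M)"
    by (rule integral_comp_mult_centered[symmetric, where B=1]) (auto simp: sgn1_bound)
  also have "\<dots> \<le> L1_norm M (\<lambda>\<omega>. L \<omega> - 1)"
    unfolding L1_norm_def using L_integrable sgn1_bound
    by (intro integral_mono integrable_bounded_mult[where B=1]) (auto simp: sgn1_def)
  finally show ?thesis .
qed

end

lemma law_density_exists:
  assumes "prob_space M" and "X \<in> measurable M borel" and "L \<in> dens_set M"
  obtains k where "law_density M X L k"
proof -
  obtain k where "k \<in> borel_measurable borel" "\<And>x. 0 \<le> k x"
    "law_under M L X = density (distr M borel X) (\<lambda>x. ennreal (k x))"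
    using law_under_eq_density[OF assms] by blast
  with assms have "law_density M X L k"
    by (simp add: law_density_def law_density_axioms_def)
  then show thesis by (rule that)
qed

lemma dens_set_comp:
  assumes [measurable]: "\<xi> \<in> measurable M borel" "k \<in> borel_measurable borel"
    and k: "k \<in> dens_set (distr M borel \<xi>)"
  shows "(\<lambda>\<omega>. k (\<xi> \<omega>)) \<in> dens_set M"
  using k by (simp add: dens_set_def integrable_distr_eq integral_distr AE_distr_iff)

lemma law_under_comp:
  assumes [measurable]: "\<xi> \<in> measurable M borel" "k \<in> borel_measurable borel"
  shows "law_under M (\<lambda>\<omega>. k (\<xi> \<omega>)) \<xi> = density (distr M borel \<xi>) (\<lambda>x. ennreal (k x))"
  unfolding law_under_def by (subst density_distr) simp_all

lemma pullback_density:
  assumes \<xi>[measurable]: "\<xi> \<in> measurable M0 borel" and M: "prob_space M"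
    and X[measurable]: "X \<in> measurable M borel" and same_law: "distr M borel X = distr M0 borel \<xi>"
    and L: "L \<in> dens_set M"
  obtains k where "k \<in> borel_measurable borel" "k \<in> dens_set (distr M0 borel \<xi>)"
    "law_under M0 (\<lambda>\<omega>. k (\<xi> \<omega>)) \<xi> = law_under M L X"
    "L1_norm M0 (\<lambda>\<omega>. k (\<xi> \<omega>) - 1) \<le> L1_norm M (\<lambda>\<omega>. L \<omega> - 1)"
    "\<And>h B. h \<in> borel_measurable borel \<Longrightarrow> (\<And>x. \<bar>h x\<bar> \<le> B) \<Longrightarrow>
      (\<integral>x. h x * (k x - 1) \<partial>distr M0 borel \<xi>) = (\<integral>\<omega>. h (X \<omega>) * (L \<omega> - 1) \<partial>M)"
proof -
  obtain k where "law_density M X L k"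
    using law_density_exists[OF M X L] by blast
  then interpret law_density M X L k .
  show thesis
  proof (rule that[of k])
    show "law_under M0 (\<lambda>\<omega>. k (\<xi> \<omega>)) \<xi> = law_under M L X"
      unfolding law_under_comp[OF \<xi> k_meas] law same_law ..
    show "L1_norm M0 (\<lambda>\<omega>. k (\<xi> \<omega>) - 1) \<le> L1_norm M (\<lambda>\<omega>. L \<omega> - 1)"
      using L1_norm_density_le L1_norm_comp[OF \<xi>, of "\<lambda>x. k x - 1"] same_law by simp
    show "(\<integral>x. h x * (k x - 1) \<partial>distr M0 borel \<xi>) = (\<integral>\<omega>. h (X \<omega>) * (L \<omega> - 1) \<partial>M)"
      if "h \<in> borel_measurable borel" "\<And>x. \<bar>h x\<bar> \<le> B" for h B
      using integral_comp_mult_centered[OF that] same_law by simp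
  qed (use k_dens_set same_law in auto)
qed

section \<open>Transfer of differentiability between representations of a law\<close>

lemma has_DF_at_1_transfer:
  fixes \<xi> :: "'a \<Rightarrow> 'b::topological_space" and X :: "'c \<Rightarrow> 'b"
  assumes M0: "prob_space M0" and \<xi>[measurable]: "\<xi> \<in> measurable M0 borel"
    and M: "prob_space M" and X[measurable]: "X \<in> measurable M borel"
    and same_law: "distr M borel X = distr M0 borel \<xi>"
    and l0: "has_DF M0 (F_fun f \<xi> M0) (\<lambda>_. 1) l0"
    and g[measurable]: "g \<in> borel_measurable borel" and g_bound: "\<And>x. \<bar>g x\<bar> \<le> B"
    and rep: "\<And>k. k \<in> L1_0 (distr M0 borel \<xi>) \<Longrightarrow> l0 (\<lambda>\<omega>. k (\<xi> \<omega>)) = (\<integral>x. g x * k x \<partial>distr M0 borel \<xi>)"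
  shows "has_DF M (F_fun f X M) (\<lambda>_. 1) (\<lambda>\<eta>. \<integral>\<omega>. g (X \<omega>) * \<eta> \<omega> \<partial>M)"
  unfolding has_DF_def
proof (intro conjI allI impI)
  show "cont_lin_L1_0 M (\<lambda>\<eta>. \<integral>\<omega>. g (X \<omega>) * \<eta> \<omega> \<partial>M)"
    using g_bound by (intro cont_lin_L1_0_integral_mult) auto
  fix \<epsilon> :: real assume "0 < \<epsilon>"
  then obtain \<delta> where \<delta>: "0 < \<delta>" and approx: "\<forall>L''\<in>dens_set M0. L1_norm M0 (\<lambda>\<omega>. L'' \<omega> - 1) < \<delta> \<longrightarrow>
      \<bar>F_fun f \<xi> M0 L'' - F_fun f \<xi> M0 (\<lambda>_. 1) - l0 (\<lambda>\<omega>. L'' \<omega> - 1)\<bar> \<le> \<epsilon> * L1_norm M0 (\<lambda>\<omega>. L'' \<omega> - 1)"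
    using l0 unfolding has_DF_def by blast
  have F_at_1: "F_fun f X M (\<lambda>_. 1) = F_fun f \<xi> M0 (\<lambda>_. 1)"
    using same_law by (simp add: F_fun_def law_under_def density_1)
  have "\<bar>F_fun f X M L - F_fun f X M (\<lambda>_. 1) - (\<integral>\<omega>. g (X \<omega>) * (L \<omega> - 1) \<partial>M)\<bar>
      \<le> \<epsilon> * L1_norm M (\<lambda>\<omega>. L \<omega> - 1)"
    if L: "L \<in> dens_set M" and small: "L1_norm M (\<lambda>\<omega>. L \<omega> - 1) < \<delta>" for L
  proof -
    obtain k where k[measurable]: "k \<in> borel_measurable borel" and k_dens: "k \<in> dens_set (distr M0 borel \<xi>)"
      and k_law: "law_under M0 (\<lambda>\<omega>. k (\<xi> \<omega>)) \<xi> = law_under M L X"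
      and k_norm: "L1_norm M0 (\<lambda>\<omega>. k (\<xi> \<omega>) - 1) \<le> L1_norm M (\<lambda>\<omega>. L \<omega> - 1)"
      and k_integral: "\<And>h B. h \<in> borel_measurable borel \<Longrightarrow> (\<And>x. \<bar>h x\<bar> \<le> B) \<Longrightarrow>
        (\<integral>x. h x * (k x - 1) \<partial>distr M0 borel \<xi>) = (\<integral>\<omega>. h (X \<omega>) * (L \<omega> - 1) \<partial>M)"
      using pullback_density[OF \<xi> M X same_law L] by blast
    interpret \<mu>: prob_space "distr M0 borel \<xi>"
      by (rule prob_space.prob_space_distr[OF M0 \<xi>])
    have "(\<lambda>x. k x - 1) \<in> L1_0 (distr M0 borel \<xi>)"
      using k_dens \<mu>.prob_space by (auto simp: dens_set_def L1_0_def)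
    from rep[OF this] have "l0 (\<lambda>\<omega>. k (\<xi> \<omega>) - 1) = (\<integral>\<omega>. g (X \<omega>) * (L \<omega> - 1) \<partial>M)"
      using k_integral[OF g g_bound] by simp
    moreover have "\<bar>F_fun f \<xi> M0 (\<lambda>\<omega>. k (\<xi> \<omega>)) - F_fun f \<xi> M0 (\<lambda>_. 1) - l0 (\<lambda>\<omega>. k (\<xi> \<omega>) - 1)\<bar>
        \<le> \<epsilon> * L1_norm M0 (\<lambda>\<omega>. k (\<xi> \<omega>) - 1)"
      using approx dens_set_comp[OF \<xi> k k_dens] k_norm small by auto
    moreover have "F_fun f \<xi> M0 (\<lambda>\<omega>. k (\<xi> \<omega>)) = F_fun f X M L"
      by (simp add: F_fun_def k_law)
    ultimately show ?thesis
      using F_at_1 k_norm \<open>0 < \<epsilon>\<close> by (smt (verit) mult_left_mono)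
  qed
  with \<delta> show "\<exists>\<delta>>0. \<forall>L\<in>dens_set M. L1_norm M (\<lambda>\<omega>. L \<omega> - 1) < \<delta> \<longrightarrow>
      \<bar>F_fun f X M L - F_fun f X M (\<lambda>_. 1) - (\<integral>\<omega>. g (X \<omega>) * (L \<omega> - 1) \<partial>M)\<bar>
        \<le> \<epsilon> * L1_norm M (\<lambda>\<omega>. L \<omega> - 1)"
    by blast
qed

lemma represents_unique:
  assumes "prob_space M" and D1: "represents M l D1" and D2: "represents M l D2"
  shows "AE \<omega> in M. D1 \<omega> = D2 \<omega>"
proof -
  interpret prob_space M by fact
  obtain C1 C2 where D1_meas[measurable]: "D1 \<in> borel_measurable M" and D2_meas[measurable]: "D2 \<in> borel_measurable M"
    and D1_bound: "AE \<omega> in M. \<bar>D1 \<omega>\<bar> \<le> C1" and D2_bound: "AE \<omega> in M. \<bar>D2 \<omega>\<bar> \<le> C2"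
    and centered: "expectation D1 = 0" "expectation D2 = 0"
    and rep: "\<And>\<eta>. \<eta> \<in> L1_0 M \<Longrightarrow> (\<integral>\<omega>. D1 \<omega> * \<eta> \<omega> \<partial>M) = (\<integral>\<omega>. D2 \<omega> * \<eta> \<omega> \<partial>M)"
    using D1 D2 by (auto simp: represents_def Linf_0_def)
  define \<eta> where "\<eta> = (\<lambda>\<omega>. D1 \<omega> - D2 \<omega>)"
  have \<eta>_bound: "AE \<omega> in M. \<bar>\<eta> \<omega>\<bar> \<le> C1 + C2"
    using D1_bound D2_bound by eventually_elim (simp add: \<eta>_def)
  have "integrable M D1"
    using D1_bound by (intro integrable_const_bound[where B=C1]) auto
  moreover have "integrable M D2"
    using D2_bound by (intro integrable_const_bound[where B=C2]) auto
  ultimately have \<eta>_L1_0: "\<eta> \<in> L1_0 M"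
    using centered by (simp add: \<eta>_def L1_0_def)
  then have "(\<integral>\<omega>. \<eta> \<omega> * \<eta> \<omega> \<partial>M) = 0"
    using rep[OF \<eta>_L1_0] integrable_bounded_mult[of M \<eta> D1 C1] integrable_bounded_mult[of M \<eta> D2 C2]
      D1_bound D2_bound
    by (simp add: \<eta>_def left_diff_distrib L1_0_def)
  then have "AE \<omega> in M. \<eta> \<omega> = 0"
    using \<eta>_bound by (intro AE_eq_0_if_integral_square_eq_0) (auto simp: \<eta>_def)
  then show ?thesis
    by eventually_elim (simp add: \<eta>_def)
qed

lemma derivative_equals_transfer:
  fixes \<xi> :: "'a \<Rightarrow> 'b::topological_space" and X :: "'c \<Rightarrow> 'b"
  assumes M0: "prob_space M0" and \<xi>[measurable]: "\<xi> \<in> measurable M0 borel"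
    and M: "prob_space M" and X[measurable]: "X \<in> measurable M borel"
    and same_law: "distr M borel X = distr M0 borel \<xi>"
    and l0: "has_DF M0 (F_fun f \<xi> M0) (\<lambda>_. 1) l0"
    and g[measurable]: "g \<in> borel_measurable borel" and g_bound: "\<And>x. \<bar>g x\<bar> \<le> B"
    and g_centered: "integral\<^sup>L (distr M0 borel \<xi>) g = 0"
    and rep: "\<And>k. k \<in> L1_0 (distr M0 borel \<xi>) \<Longrightarrow> l0 (\<lambda>\<omega>. k (\<xi> \<omega>)) = (\<integral>x. g x * k x \<partial>distr M0 borel \<xi>)"
  shows "derivative_equals M (F_fun f X M) (\<lambda>_. 1) (\<lambda>\<omega>. g (X \<omega>)) M"
proof -
  note DF = has_DF_at_1_transfer[OF M0 \<xi> M X same_law l0 g g_bound rep]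
  have "integral\<^sup>L M (\<lambda>\<omega>. g (X \<omega>)) = 0"
    using g_centered same_law integral_distr[OF X g] by simp
  then have "(\<lambda>\<omega>. g (X \<omega>)) \<in> Linf_0 M"
    using g_bound by (auto simp: Linf_0_def)
  then have rep_gX: "represents M l (\<lambda>\<omega>. g (X \<omega>))" if "has_DF M (F_fun f X M) (\<lambda>_. 1) l" for l
    using has_DF_at_1_unique[OF M that DF] by (simp add: represents_def)
  then show ?thesis
    using DF represents_unique[OF M] unfolding derivative_equals_def by blast
qed

lemma AE_of_AE_density:
  assumes "L \<in> dens_set M" and "AE \<omega> in density M (\<lambda>\<omega>. ennreal (L \<omega>)). P \<omega>"
  shows "AE \<omega> in M. P \<omega>"
proof -
  have [measurable]: "L \<in> borel_measurable M" and L_pos: "AE \<omega> in M. 0 < L \<omega>"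
    using assms(1) by (auto simp: dens_set_def)
  have "AE \<omega> in M. 0 < ennreal (L \<omega>) \<longrightarrow> P \<omega>"
    using assms(2) by (subst (asm) AE_density) auto
  with L_pos show ?thesis
    by eventually_elim simp
qed

lemma derivative_at_1_depends_only_on_law:
  fixes \<xi> :: "'a \<Rightarrow> 'b::topological_space"
  assumes M0: "prob_space M0" and \<xi>[measurable]: "\<xi> \<in> measurable M0 borel"
    and l0: "has_DF M0 (F_fun f \<xi> M0) (\<lambda>_. 1) l0"
  obtains g where "g \<in> borel_measurable borel" "bounded (range g)"
    "\<And>(M :: 'c measure) X. prob_space M \<Longrightarrow> X \<in> measurable M borel \<Longrightarrow>
      distr M borel X = distr M0 borel \<xi> \<Longrightarrow>
      derivative_equals M (F_fun f X M) (\<lambda>_. 1) (\<lambda>\<omega>. g (X \<omega>)) M"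
proof -
  obtain g where g_meas: "g \<in> borel_measurable (distr M0 borel \<xi>)" and g_bounded: "bounded (range g)"
    and g_centered: "integral\<^sup>L (distr M0 borel \<xi>) g = 0"
    and rep: "\<And>k. k \<in> L1_0 (distr M0 borel \<xi>) \<Longrightarrow> l0 (\<lambda>\<omega>. k (\<xi> \<omega>)) = (\<integral>x. g x * k x \<partial>distr M0 borel \<xi>)"
    using cont_lin_L1_0_representation[OF prob_space.prob_space_distr[OF M0 \<xi>] cont_lin_L1_0_comp[OF \<xi>]] l0
    by (auto simp: has_DF_def)
  obtain B where B: "\<And>x. \<bar>g x\<bar> \<le> B"
    using g_bounded by (auto simp: bounded_iff)
  have g: "g \<in> borel_measurable borel"
    using g_meas by simp
  show thesis
    using derivative_equals_transfer[OF M0 \<xi> _ _ _ l0 g B g_centered rep] by (rule that[OF g g_bounded])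
qed

theorem theorem3p1:
  fixes Q :: "'a::topological_space measure"
    and \<xi> :: "'a \<Rightarrow> real ^ 'd"
    and f :: "(real ^ 'd) measure \<Rightarrow> real"
    and L :: "'a \<Rightarrow> real"
  assumes radon: "radon_space TYPE('a)"
    and Q_sets: "sets Q = sets borel"
    and Q_prob: "prob_space Q"
    and \<xi>_meas: "\<xi> \<in> measurable (completion Q) borel"
    and L_dens: "L \<in> dens_set (completion Q)"
    and diff: "\<exists>l. has_DF (density (completion Q) (\<lambda>\<omega>. ennreal (L \<omega>)))
                   (F_fun f \<xi> (density (completion Q) (\<lambda>\<omega>. ennreal (L \<omega>)))) (\<lambda>_. 1) l"
  shows "\<exists>g :: real ^ 'd \<Rightarrow> real. g \<in> borel_measurable borel \<and> bounded (range g) \<and>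
    derivative_equals (density (completion Q) (\<lambda>\<omega>. ennreal (L \<omega>)))
      (F_fun f \<xi> (density (completion Q) (\<lambda>\<omega>. ennreal (L \<omega>)))) (\<lambda>_. 1)
      (\<lambda>\<omega>. g (\<xi> \<omega>)) (completion Q) \<and>
    (\<forall>(Q' :: 'a measure) (L' :: 'a \<Rightarrow> real) (\<xi>' :: 'a \<Rightarrow> real ^ 'd).
       sets Q' = sets (completion Q) \<and> prob_space Q' \<and> L' \<in> dens_set Q' \<and>
       \<xi>' \<in> measurable Q' borel \<and> law_under Q' L' \<xi>' = law_under (completion Q) L \<xi> \<longrightarrow>
       derivative_equals (density Q' (\<lambda>\<omega>. ennreal (L' \<omega>)))
         (F_fun f \<xi>' (density Q' (\<lambda>\<omega>. ennreal (L' \<omega>)))) (\<lambda>_. 1)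
         (\<lambda>\<omega>. g (\<xi>' \<omega>)) (density Q' (\<lambda>\<omega>. ennreal (L' \<omega>))))"
proof -
  define M0 where "M0 = density (completion Q) (\<lambda>\<omega>. ennreal (L \<omega>))"
  have M0: "prob_space M0"
    unfolding M0_def using L_dens by (rule prob_space_density_dens_set)
  have \<xi>0: "\<xi> \<in> measurable M0 borel"
    using \<xi>_meas by (simp add: M0_def)
  obtain l0 where "has_DF M0 (F_fun f \<xi> M0) (\<lambda>_. 1) l0"
    using diff unfolding M0_def by blast
  then obtain g where g: "g \<in> borel_measurable borel" "bounded (range g)"
    and transfer: "\<And>(M :: 'a measure) X. prob_space M \<Longrightarrow> X \<in> measurable M borel \<Longrightarrow>
      distr M borel X = distr M0 borel \<xi> \<Longrightarrow> derivative_equals M (F_fun f X M) (\<lambda>_. 1) (\<lambda>\<omega>. g (X \<omega>)) M"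
    using derivative_at_1_depends_only_on_law[OF M0 \<xi>0] by blast
  show ?thesis
    unfolding M0_def[symmetric]
  proof (intro exI[of _ g] conjI allI impI g)
    show "derivative_equals M0 (F_fun f \<xi> M0) (\<lambda>_. 1) (\<lambda>\<omega>. g (\<xi> \<omega>)) (completion Q)"
      using transfer[OF M0 \<xi>0 refl] AE_of_AE_density[OF L_dens, folded M0_def]
      unfolding derivative_equals_def by blast
  next
    fix Q' :: "'a measure" and L' \<xi>'
    assume "sets Q' = sets (completion Q) \<and> prob_space Q' \<and> L' \<in> dens_set Q' \<and>
       \<xi>' \<in> measurable Q' borel \<and> law_under Q' L' \<xi>' = law_under (completion Q) L \<xi>"
    then show "derivative_equals (density Q' (\<lambda>\<omega>. ennreal (L' \<omega>)))
         (F_fun f \<xi>' (density Q' (\<lambda>\<omega>. ennreal (L' \<omega>)))) (\<lambda>_. 1)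
         (\<lambda>\<omega>. g (\<xi>' \<omega>)) (density Q' (\<lambda>\<omega>. ennreal (L' \<omega>)))"
      by (intro transfer) (auto simp: prob_space_density_dens_set law_under_def M0_def)
  qed
qed

end
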